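(* Let $X$ be a finite set, $r\ge 3$, and $\tau$ a non-empty subset of $\binom{X}{r}$. If $\tau$ is slim then $\tau$ is thin. Moreover, for $r=3$, $\tau$ is thin if and only if $\tau$ is slim.
   Context: $L(\tau)=\bigcup_{s\in\tau}s$. For $\tau\subseteq\binom{X}{r}$ non-empty, ${\rm exc}(\tau)=|L(\tau)|-|\tau|-(r-1)$ and $\tau$ is thin if ${\rm exc}(\tau')\ge0$ for all non-empty $\tau'\subseteq\tau$. For a non-empty collection $\tau$ of subsets of $X$ each of size at least 3, ${\rm exc}'(\tau)=|L(\tau)|-2-\sum_{s\in\tau}(|s|-2)$, and $\tau$ is slim if ${\rm exc}'(\tau')\ge0$ for all non-empty $\tau'\subseteq\tau$. *)

theory Defs
  imports Main
begin

definition L :: "'a set set \<Rightarrow> 'a set" where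
  "L \<tau> = \<Union>\<tau>"

definition exc :: "nat \<Rightarrow> 'a set set \<Rightarrow> int" where
  "exc r \<tau> = int (card (L \<tau>)) - int (card \<tau>) - (int r - 1)"

definition thin :: "nat \<Rightarrow> 'a set set \<Rightarrow> bool" where
  "thin r \<tau> \<longleftrightarrow> (\<forall>\<tau>'. \<tau>' \<subseteq> \<tau> \<and> \<tau>' \<noteq> {} \<longrightarrow> exc r \<tau>' \<ge> 0)"

definition exc' :: "'a set set \<Rightarrow> int" where
  "exc' \<tau> = int (card (L \<tau>)) - 2 - (\<Sum>s\<in>\<tau>. int (card s) - 2)"

definition slim :: "'a set set \<Rightarrow> bool" where
  "slim \<tau> \<longleftrightarrow> (\<forall>\<tau>'. \<tau>' \<subseteq> \<tau> \<and> \<tau>' \<noteq> {} \<longrightarrow> exc' \<tau>' \<ge> 0)"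

end

theory Submission
  imports Defs
begin

text \<open>For an \<open>r\<close>-uniform family each set is charged \<open>1\<close> by \<open>exc\<close> and \<open>r - 2\<close> by \<open>exc'\<close>,
  so \<open>exc - exc' = (|\<tau>| - 1)(r - 3)\<close>: non-negative for \<open>r \<ge> 3\<close> and zero for \<open>r = 3\<close>.
  The identity also holds for infinite \<open>\<tau>\<close>, where \<open>card\<close> and the sum are both \<open>0\<close>.\<close>

lemma exc_eq_exc'_uniform:
  assumes "\<forall>s\<in>\<tau>. card s = r"
  shows "exc r \<tau> = exc' \<tau> + (int (card \<tau>) - 1) * (int r - 3)"
proof -
  have "(\<Sum>s\<in>\<tau>. int (card s) - 2) = int (card \<tau>) * (int r - 2)"
    using assms by simp
  then show ?thesis
    unfolding exc_def exc'_def by (simp add: algebra_simps)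
qed

lemma exc'_le_exc_uniform:
  assumes "\<forall>s\<in>\<tau>. card s = r" and "r \<ge> 3" and "finite \<tau>" and "\<tau> \<noteq> {}"
  shows "exc' \<tau> \<le> exc r \<tau>"
proof -
  have "card \<tau> \<ge> 1"
    using assms(3,4) by (simp add: Suc_le_eq card_gt_0_iff)
  then have "(int (card \<tau>) - 1) * (int r - 3) \<ge> 0"
    using assms(2) by simp
  then show ?thesis
    using exc_eq_exc'_uniform[OF assms(1)] by simp
qed

lemma slim_imp_thin_uniform:
  assumes "\<forall>s\<in>\<tau>. card s = r" and "r \<ge> 3" and "finite \<tau>" and "slim \<tau>"
  shows "thin r \<tau>"
  unfolding thin_def
proof (intro allI impI)
  fix \<tau>' assume sub: "\<tau>' \<subseteq> \<tau> \<and> \<tau>' \<noteq> {}"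
  then have "exc' \<tau>' \<le> exc r \<tau>'"
    using assms(1-3) by (intro exc'_le_exc_uniform) (auto intro: finite_subset)
  moreover have "exc' \<tau>' \<ge> 0"
    using assms(4) sub unfolding slim_def by blast
  ultimately show "exc r \<tau>' \<ge> 0" by linarith
qed

lemma thin_3_iff_slim:
  assumes "\<forall>s\<in>\<tau>. card s = 3"
  shows "thin 3 \<tau> \<longleftrightarrow> slim \<tau>"
proof -
  have "exc 3 \<tau>' = exc' \<tau>'" if "\<tau>' \<subseteq> \<tau>" for \<tau>'
    using exc_eq_exc'_uniform[of \<tau>' 3] assms that by auto
  then show ?thesis
    unfolding thin_def slim_def by auto
qed

theorem lemma4:
  fixes X :: "'a set" and \<tau> :: "'a set set" and r :: nat
  assumes "finite X" and "r \<ge> 3"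
    and "\<tau> \<subseteq> {s. s \<subseteq> X \<and> card s = r}" and "\<tau> \<noteq> {}"
  shows "(slim \<tau> \<longrightarrow> thin r \<tau>) \<and> (r = 3 \<longrightarrow> (thin r \<tau> \<longleftrightarrow> slim \<tau>))"
proof -
  have uniform: "\<forall>s\<in>\<tau>. card s = r"
    using assms(3) by auto
  have "finite \<tau>"
    using assms(1,3) by (auto intro: finite_subset[of _ "Pow X"])
  then show ?thesis
    using slim_imp_thin_uniform[OF uniform assms(2)] thin_3_iff_slim uniform by blast
qed

end
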